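(* Let $P$ be a finite poset, $\phi\in\mathrm{Hom}(P,\mathbb{N})$, $m=\overline{\Lambda}\phi$ and $b\in P$. Then the longest $b$-chain in $m$ has length $\phi(b)$.
   Context: $\mathbb{N}=\{0,1,\dots\}$; $\mathrm{Hom}(P,\mathbb{N})$ is the set of isotone maps $P\to\mathbb{N}$. The ascent is $\Lambda\phi=\{(p,i)\in P\times\mathbb{N}:\phi(q)\le i<\phi(p)\ \forall q<p\}$ and $\overline{\Lambda}\phi=\prod_{(p,i)\in\Lambda\phi}x_p\in k[x_P]$. For $b\in P$, a $b$-chain is a multichain $p_1\le p_2\le\dots\le p_r$ in $P$ with $p_r\le b$; its length is $r$; it is in a monomial $m$ if $\prod_{i=1}^r x_{p_i}$ divides $m$. *)

theory Defs
  imports Main "HOL-Library.Multiset"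
begin

text \<open>The finite poset P is a type of class finite with a partial order.
  A monomial in k[x_P] is represented by its exponent multiset over P;
  divisibility of monomials is multiset inclusion.\<close>

definition ascent :: "('a::order \<Rightarrow> nat) \<Rightarrow> ('a \<times> nat) set" where
  "ascent \<phi> = {(p, i). (\<forall>q. q < p \<longrightarrow> \<phi> q \<le> i) \<and> i < \<phi> p}"

definition ascent_monomial :: "('a::{order,finite} \<Rightarrow> nat) \<Rightarrow> 'a multiset" where
  "ascent_monomial \<phi> = (\<Sum>p\<in>UNIV. replicate_mset (card {i. (p, i) \<in> ascent \<phi>}) p)"

definition b_chain :: "'a::order \<Rightarrow> 'a list \<Rightarrow> bool" where
  "b_chain b c \<longleftrightarrow> sorted_wrt (\<le>) c \<and> (c \<noteq> [] \<longrightarrow> last c \<le> b)"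

definition chain_in :: "'a list \<Rightarrow> 'a multiset \<Rightarrow> bool" where
  "chain_in c m \<longleftrightarrow> mset c \<subseteq># m"

end

theory Submission
  imports Defs
begin

text \<open>Write \<open>\<mu>(x)\<close> for the largest value of \<open>\<phi>\<close> strictly below \<open>x\<close>. The ascent of \<open>\<phi>\<close>
  contributes exactly \<open>\<phi>(x) - \<mu>(x)\<close> copies of \<open>x\<close> to \<open>m\<close>. A \<open>b\<close>-chain in \<open>m\<close> splits into the
  copies of its top element \<open>x \<le> b\<close> and a chain of elements strictly below \<open>x\<close>, which by
  well-founded induction has length at most \<open>\<mu>(x)\<close>; hence the chain has length at most
  \<open>\<phi>(x) \<le> \<phi>(b)\<close>. Conversely, a longest chain below an element \<open>q < b\<close> attaining \<open>\<mu>(b)\<close>,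
  followed by \<open>\<phi>(b) - \<mu>(b)\<close> copies of \<open>b\<close>, is a \<open>b\<close>-chain in \<open>m\<close> of length \<open>\<phi>(b)\<close>.\<close>

lemma wfp_less_finite: "wfp ((<) :: 'a::{order,finite} \<Rightarrow> 'a \<Rightarrow> bool)"
  by (rule strict_partial_order_wfp_on_finite_set) (auto intro: transp_onI asymp_onI)

lemma sorted_wrt_replicate: "R x x \<Longrightarrow> sorted_wrt R (replicate n x)"
  by (induction n) auto

definition max_below :: "('a::{order,finite} \<Rightarrow> nat) \<Rightarrow> 'a \<Rightarrow> nat" where
  "max_below \<phi> x = Max (insert 0 (\<phi> ` {q. q < x}))"

lemma le_max_below: "q < x \<Longrightarrow> \<phi> q \<le> max_below \<phi> x"
  unfolding max_below_def by (rule Max_ge) auto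

lemma max_below_le: "mono \<phi> \<Longrightarrow> max_below \<phi> x \<le> \<phi> x"
  unfolding max_below_def by (rule Max.boundedI) (auto simp: mono_def)

lemma max_below_le_iff: "max_below \<phi> x \<le> i \<longleftrightarrow> (\<forall>q. q < x \<longrightarrow> \<phi> q \<le> i)"
  unfolding max_below_def by (subst Max_le_iff) auto

lemma max_below_attained:
  assumes "max_below \<phi> x \<noteq> 0"
  obtains q where "q < x" "\<phi> q = max_below \<phi> x"
proof -
  have "max_below \<phi> x \<in> insert 0 (\<phi> ` {q. q < x})"
    unfolding max_below_def by (rule Max_in) auto
  with assms that show ?thesis by auto
qed

lemma ascent_fibre: "{i. (x, i) \<in> ascent \<phi>} = {max_below \<phi> x..<\<phi> x}"
  by (auto simp: ascent_def max_below_le_iff)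

lemma count_ascent_monomial: "count (ascent_monomial \<phi>) x = \<phi> x - max_below \<phi> x"
proof -
  have "count (ascent_monomial \<phi>) x
      = (\<Sum>p\<in>UNIV. if p = x then card {i. (x, i) \<in> ascent \<phi>} else 0)"
    unfolding ascent_monomial_def count_sum by (rule sum.cong) auto
  also have "\<dots> = \<phi> x - max_below \<phi> x"
    by (simp add: ascent_fibre)
  finally show ?thesis .
qed

lemma b_chain_iff: "b_chain b c \<longleftrightarrow> sorted_wrt (\<le>) c \<and> (\<forall>z\<in>set c. z \<le> b)"
proof (cases c rule: rev_cases)
  case (snoc c' x)
  then show ?thesis
    by (auto simp: b_chain_def sorted_wrt_append intro: order_trans)
qed (simp add: b_chain_def)

lemma length_b_chain_le:
  assumes "mono \<phi>" and "b_chain x c" and "chain_in c (ascent_monomial \<phi>)"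
  shows "length c \<le> \<phi> x"
  using wfp_less_finite assms(2,3)
proof (induction x arbitrary: c rule: wfp_induct_rule)
  case (less x)
  define c' where "c' = filter (\<lambda>y. y \<noteq> x) c"
  have sorted_c': "sorted_wrt (\<le>) c'" and below_x: "\<forall>z\<in>set c'. z < x"
    using less.prems unfolding c'_def b_chain_iff by (auto simp: sorted_wrt_filter)
  have length_split: "length c = length c' + count (mset c) x"
    unfolding c'_def by (induction c) auto
  have count_x: "count (mset c) x \<le> \<phi> x - max_below \<phi> x"
    using less.prems(2) count_ascent_monomial[of \<phi> x]
    unfolding chain_in_def by (metis mset_subset_eq_count)
  have "length c' \<le> max_below \<phi> x"
  proof (cases c' rule: rev_cases)
    case (snoc c'' y)
    have "y < x" using below_x snoc by simp
    moreover have "b_chain y c'" using sorted_c' snoc by (simp add: b_chain_def)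
    moreover have "chain_in c' (ascent_monomial \<phi>)"
      using less.prems(2) unfolding chain_in_def c'_def
      by (metis mset_filter multiset_filter_subset subset_mset.order_trans)
    ultimately have "length c' \<le> \<phi> y" using less.IH by blast
    also have "\<phi> y \<le> max_below \<phi> x" using \<open>y < x\<close> by (rule le_max_below)
    finally show ?thesis .
  qed simp
  then show ?case
    using length_split count_x max_below_le[OF assms(1), of x] by linarith
qed

lemma longest_b_chain_exists:
  assumes "mono \<phi>"
  obtains c where "b_chain x c" "chain_in c (ascent_monomial \<phi>)" "length c = \<phi> x"
  using wfp_less_finite
proof (induction x arbitrary: thesis rule: wfp_induct_rule)
  case (less x)
  obtain c where c: "sorted_wrt (\<le>) c" "chain_in c (ascent_monomial \<phi>)" "length c = max_below \<phi> x"
    and below_x: "\<forall>z\<in>set c. z < x"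
  proof (cases "max_below \<phi> x = 0")
    case True
    then show ?thesis using that[of "[]"] by (simp add: chain_in_def)
  next
    case False
    then obtain q where "q < x" "\<phi> q = max_below \<phi> x"
      by (rule max_below_attained)
    moreover obtain c where "b_chain q c" "chain_in c (ascent_monomial \<phi>)" "length c = \<phi> q"
      using less.IH[OF \<open>q < x\<close>] by blast
    ultimately show ?thesis
      using that[of c] by (auto simp: b_chain_iff intro: le_less_trans)
  qed
  define d where "d = c @ replicate (\<phi> x - max_below \<phi> x) x"
  have "count (mset c) x = 0" using below_x by (auto simp: count_eq_zero_iff)
  then have "chain_in d (ascent_monomial \<phi>)"
    using c(2) unfolding d_def chain_in_def subseteq_mset_def
    by (auto simp: count_ascent_monomial)
  moreover have "b_chain x d"
    using c(1) below_x unfolding d_def b_chain_iff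
    by (auto simp: sorted_wrt_append sorted_wrt_replicate less_imp_le)
  moreover have "length d = \<phi> x"
    unfolding d_def using c(3) max_below_le[OF assms, of x] by simp
  ultimately show ?case using less.prems by blast
qed

theorem lemma3p9:
  fixes \<phi> :: "'a::{order,finite} \<Rightarrow> nat" and b :: 'a and m :: "'a multiset"
  assumes "mono \<phi>"
    and "m = ascent_monomial \<phi>"
  shows "(\<exists>c. b_chain b c \<and> chain_in c m \<and> length c = \<phi> b)
       \<and> (\<forall>c. b_chain b c \<and> chain_in c m \<longrightarrow> length c \<le> \<phi> b)"
  using longest_b_chain_exists[OF assms(1)] length_b_chain_le[OF assms(1)]
  unfolding assms(2) by blast

end
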